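(* Let $(u_n),(v_n)$ be complex sequences vanishing faster than any negative power of $|n|$ as $n\to\pm\infty$ with $1-u_nv_n\ne0$ for all $n\in\mathbb Z$, and consider the system $$\begin{bmatrix}\xi_n\\ \eta_n\end{bmatrix}=\begin{bmatrix} z & z\,u_n\\ z^{-1}v_n & z^{-1}\end{bmatrix}\begin{bmatrix}\xi_{n+1}\\ \eta_{n+1}\end{bmatrix},\qquad n\in\mathbb Z.$$ Define $a_n:=\det\begin{bmatrix}\phi_n&\psi_n\end{bmatrix}$ and $\bar a_n:=\det\begin{bmatrix}\bar\phi_n&\bar\psi_n\end{bmatrix}$. Then: (a) $a_n$ and $\bar a_n$ depend on both $n$ and $z$, and $$a_n=\frac{D_\infty}{D_{n-1}}\,\frac1{T_{\rm r}},\qquad \bar a_n=-\frac{D_\infty}{D_{n-1}}\,\frac1{\bar T_{\rm r}};$$ (b) consequently the linear dependence of $\phi_n$ and $\psi_n$ occurs at the poles of $T_{\rm r}$, and that of $\bar\phi_n$ and $\bar\psi_n$ at the poles of $\bar T_{\rm r}$; (c) if $T_{\rm r}$ has a pole at $z=\pm z_j$ of multiplicity $m_j$ then $\frac{d^k a_n}{dz^k}\big|_{z=\pm z_j}=0$ for $0\le k\le m_j-1$ and all $n\in\mathbb Z$, and if $\bar T_{\rm r}$ has a pole at $z=\pm\bar z_j$ of multiplicity $\bar m_j$ then $\frac{d^k \bar a_n}{dz^k}\big|_{z=\pm \bar z_j}=0$ for $0\le k\le \bar m_j-1$ and all $n\in\mathbb Z$.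
   Context: $D_n:=\prod_{j=-\infty}^{n}(1-u_jv_j)$ and $D_\infty:=\prod_{j=-\infty}^{\infty}(1-u_jv_j)$ (both nonzero and independent of $z$). For $|z|=1$ the Jost solutions (overbars are not complex conjugation) satisfy $\psi_n=\begin{bmatrix}o(1)\\ z^n[1+o(1)]\end{bmatrix}$ as $n\to+\infty$; $\phi_n=\begin{bmatrix}z^{-n}[1+o(1)]\\ o(1)\end{bmatrix}$ as $n\to-\infty$; $\bar\psi_n=\begin{bmatrix}z^{-n}[1+o(1)]\\ o(1)\end{bmatrix}$ as $n\to+\infty$; $\bar\phi_n=\begin{bmatrix}o(1)\\ z^{n}[1+o(1)]\end{bmatrix}$ as $n\to-\infty$. The right transmission coefficients are defined by: first component of $\phi_n$ $=(1/T_{\rm r})z^{-n}[1+o(1)]$ and second component of $\bar\phi_n$ $=(1/\bar T_{\rm r})z^{n}[1+o(1)]$ as $n\to+\infty$. The functions $z^{-n}\psi_n$, $z^n\phi_n$, $1/T_{\rm r}$ extend analytically to $|z|<1$ and $z^n\bar\psi_n$, $z^{-n}\bar\phi_n$, $1/\bar T_{\rm r}$ extend analytically to $|z|>1$; the statements about poles and derivatives refer to these extensions. *)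

theory Defs
  imports "HOL-Complex_Analysis.Complex_Analysis"
begin

definition scalev :: "complex \<Rightarrow> complex \<times> complex \<Rightarrow> complex \<times> complex" where
  "scalev c x = (c * fst x, c * snd x)"

definition det2 :: "complex \<times> complex \<Rightarrow> complex \<times> complex \<Rightarrow> complex" where
  "det2 x y = fst x * snd y - snd x * fst y"

definition is_solution ::
  "(int \<Rightarrow> complex) \<Rightarrow> (int \<Rightarrow> complex) \<Rightarrow> complex \<Rightarrow> (int \<Rightarrow> complex \<times> complex) \<Rightarrow> bool" where
  "is_solution u v z X \<longleftrightarrow>
     (\<forall>n::int. fst (X n) = z * fst (X (n + 1)) + z * u n * snd (X (n + 1)) \<and>
               snd (X n) = inverse z * v n * fst (X (n + 1)) + inverse z * snd (X (n + 1)))"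

definition rapidly_decaying :: "(int \<Rightarrow> complex) \<Rightarrow> bool" where
  "rapidly_decaying u \<longleftrightarrow>
     (\<forall>k::nat. ((\<lambda>n::int. of_int \<bar>n\<bar> ^ k * u n) \<longlongrightarrow> 0) at_top \<and>
               ((\<lambda>n::int. of_int \<bar>n\<bar> ^ k * u n) \<longlongrightarrow> 0) at_bot)"

definition Dn :: "(int \<Rightarrow> complex) \<Rightarrow> (int \<Rightarrow> complex) \<Rightarrow> int \<Rightarrow> complex" where
  "Dn u v n = (\<Prod>k::nat. 1 - u (n - int k) * v (n - int k))"

text \<open>D_inf = prod_{j = -\<infinity>}^{\<infinity>} (1 - u_j v_j) = D_{-1} * prod_{j = 0}^{\<infinity>} (1 - u_j v_j)\<close>
definition Dinf :: "(int \<Rightarrow> complex) \<Rightarrow> (int \<Rightarrow> complex) \<Rightarrow> complex" where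
  "Dinf u v = Dn u v (-1) * (\<Prod>k::nat. 1 - u (int k) * v (int k))"

definition lin_dep2 :: "complex \<times> complex \<Rightarrow> complex \<times> complex \<Rightarrow> bool" where
  "lin_dep2 x y \<longleftrightarrow> (\<exists>\<alpha> \<beta>. (\<alpha>, \<beta>) \<noteq> (0, 0) \<and>
      \<alpha> * fst x + \<beta> * fst y = 0 \<and> \<alpha> * snd x + \<beta> * snd y = 0)"

end

theory Submission
  imports Defs
begin

text \<open>
  The Wronskian W_n = det [X_n Y_n] of two solutions obeys W_n = (1 - u_n v_n) W_(n+1), so
  W_n D_(n-1) does not depend on n; since D_n tends to D_inf, W_n = D_inf / D_(n-1) * W_+, where
  W_+ is the limit of W_n as n -> +inf. For |z| = 1 this limit is computed by Cramer's rule in the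
  eventual basis psibar_n, psi_n: the first component of z^n phi_n tends to W_+(phi, psi), which
  is therefore 1/T_r, and the second component of z^-n phibar_n tends to -W_+(phibar, psibar),
  which is therefore 1/Tbar_r. Both sides of the resulting identities are holomorphic inside
  (resp. outside) the unit circle and continuous up to it, so they extend off the circle: inside by
  the maximum modulus principle, outside by a reflection argument. Since D_inf / D_(n-1) is
  nonzero, the Wronskian vanishes exactly where 1/T_r does, and a pole of order m of T_r is a zero
  of order m of 1/T_r.
\<close>

lemma det2_scalev: "det2 (scalev a x) (scalev b y) = a * b * det2 x y"
  by (simp add: det2_def scalev_def algebra_simps)

lemma det2_scalev_powi:
  assumes "z \<noteq> 0"
  shows "det2 (scalev (z powi (- n)) x) (scalev (z powi n) y) = det2 x y"
    and "det2 (scalev (z powi n) x) (scalev (z powi (- n)) y) = det2 x y"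
  using assms by (simp_all add: det2_scalev power_int_minus)

lemma lin_dep2_iff_det2_eq_0: "lin_dep2 x y \<longleftrightarrow> det2 x y = 0"
proof
  assume "lin_dep2 x y"
  then obtain a b where ab: "(a, b) \<noteq> (0, 0)" "a * fst x + b * fst y = 0" "a * snd x + b * snd y = 0"
    unfolding lin_dep2_def by blast
  have "a * det2 x y = (a * fst x + b * fst y) * snd y - (a * snd x + b * snd y) * fst y"
   and "b * det2 x y = fst x * (a * snd x + b * snd y) - snd x * (a * fst x + b * fst y)"
    by (simp_all add: det2_def algebra_simps)
  with ab show "det2 x y = 0" by auto
next
  assume det: "det2 x y = 0"
  consider "snd x \<noteq> 0 \<or> snd y \<noteq> 0" | "fst x \<noteq> 0 \<or> fst y \<noteq> 0" | "x = (0, 0)"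
    by (metis prod.collapse)
  then show "lin_dep2 x y"
  proof cases
    case 1
    with det show ?thesis unfolding lin_dep2_def
      by (intro exI[of _ "snd y"] exI[of _ "- snd x"]) (auto simp: det2_def algebra_simps)
  next
    case 2
    with det show ?thesis unfolding lin_dep2_def
      by (intro exI[of _ "fst y"] exI[of _ "- fst x"]) (auto simp: det2_def algebra_simps)
  next
    case 3
    then show ?thesis unfolding lin_dep2_def by (intro exI[of _ 1] exI[of _ 0]) auto
  qed
qed

lemma holomorphic_on_det2:
  assumes "(\<lambda>z. fst (X z)) holomorphic_on S \<and> (\<lambda>z. snd (X z)) holomorphic_on S"
    and "(\<lambda>z. fst (Y z)) holomorphic_on S \<and> (\<lambda>z. snd (Y z)) holomorphic_on S"
  shows "(\<lambda>z. det2 (X z) (Y z)) holomorphic_on S"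
  using assms unfolding det2_def by (auto intro!: holomorphic_intros)

lemma continuous_on_det2:
  assumes "continuous_on S (\<lambda>z. fst (X z)) \<and> continuous_on S (\<lambda>z. snd (X z))"
    and "continuous_on S (\<lambda>z. fst (Y z)) \<and> continuous_on S (\<lambda>z. snd (Y z))"
  shows "continuous_on S (\<lambda>z. det2 (X z) (Y z))"
  using assms unfolding det2_def by (auto intro!: continuous_intros)

lemma det2_solution_step:
  assumes "is_solution u v z X" "is_solution u v z Y" "z \<noteq> 0"
  shows "det2 (X n) (Y n) = (1 - u n * v n) * det2 (X (n + 1)) (Y (n + 1))"
proof -
  from assms(1,2) have
    "fst (X n) = z * fst (X (n + 1)) + z * u n * snd (X (n + 1))"
    "snd (X n) = inverse z * v n * fst (X (n + 1)) + inverse z * snd (X (n + 1))"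
    "fst (Y n) = z * fst (Y (n + 1)) + z * u n * snd (Y (n + 1))"
    "snd (Y n) = inverse z * v n * fst (Y (n + 1)) + inverse z * snd (Y (n + 1))"
    unfolding is_solution_def by blast+
  then have "det2 (X n) (Y n) = z * inverse z * ((1 - u n * v n) * det2 (X (n + 1)) (Y (n + 1)))"
    unfolding det2_def by (simp add: algebra_simps)
  with assms(3) show ?thesis by simp
qed

section \<open>Rapid decay and infinite products\<close>

lemma rapidly_decaying_mult:
  assumes "rapidly_decaying u" "rapidly_decaying v"
  shows "rapidly_decaying (\<lambda>n. u n * v n)"
  unfolding rapidly_decaying_def
proof
  fix k
  have "((\<lambda>n::int. of_int \<bar>n\<bar> ^ k * u n) \<longlongrightarrow> 0) F" "((\<lambda>n::int. of_int \<bar>n\<bar> ^ 0 * v n) \<longlongrightarrow> 0) F"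
    if "F = at_top \<or> F = at_bot" for F
    using assms that unfolding rapidly_decaying_def by blast+
  from tendsto_mult[OF this] show
    "((\<lambda>n. of_int \<bar>n\<bar> ^ k * (u n * v n)) \<longlongrightarrow> 0) at_top \<and>
     ((\<lambda>n. of_int \<bar>n\<bar> ^ k * (u n * v n)) \<longlongrightarrow> 0) at_bot"
    by (simp add: mult.assoc)
qed

lemma summable_norm_of_square_decay:
  fixes w :: "int \<Rightarrow> 'a::real_normed_field" and h :: "nat \<Rightarrow> int"
  assumes lim: "((\<lambda>k. of_int \<bar>h k\<bar> ^ 2 * w (h k)) \<longlongrightarrow> 0) sequentially"
    and linear: "\<forall>\<^sub>F k in sequentially. real k \<le> 2 * of_int \<bar>h k\<bar>"
  shows "summable (\<lambda>k. norm (w (h k)))"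
proof (rule summable_comparison_test_ev)
  have small: "\<forall>\<^sub>F k in sequentially. norm (of_int \<bar>h k\<bar> ^ 2 * w (h k)) < 1"
    using lim by (simp add: tendsto_iff dist_norm del: norm_mult)
  show "\<forall>\<^sub>F k in sequentially. norm (norm (w (h k))) \<le> 4 * inverse (real k ^ 2)"
    using small linear eventually_gt_at_top[of "0::nat"]
  proof eventually_elim
    case (elim k)
    then have hk: "real k / 2 \<le> real_of_int \<bar>h k\<bar>" and k: "0 < real k" by simp_all
    have "real_of_int \<bar>h k\<bar> ^ 2 * norm (w (h k)) < 1"
      using elim(1) by (simp add: norm_mult norm_power)
    then have "norm (w (h k)) \<le> 1 / real_of_int \<bar>h k\<bar> ^ 2"
      using hk k by (simp add: field_simps)
    also have "\<dots> \<le> 1 / (real k / 2) ^ 2"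
      using hk k by (intro divide_left_mono mult_pos_pos power_mono) auto
    also have "\<dots> = 4 * inverse (real k ^ 2)" by (simp add: field_simps)
    finally show ?case by simp
  qed
  show "summable (\<lambda>k. 4 * inverse (real k ^ 2))"
    by (intro summable_mult inverse_power_summable) auto
qed

lemma filterlim_diff_int_at_bot: "filterlim (\<lambda>k::nat. m - int k) at_bot sequentially"
  unfolding filterlim_at_bot
proof
  fix Z :: int
  show "\<forall>\<^sub>F k in sequentially. m - int k \<le> Z"
    using eventually_ge_at_top[of "nat (m - Z)"] by eventually_elim linarith
qed

lemma convergent_prod_one_minus_decaying:
  fixes w :: "int \<Rightarrow> complex"
  assumes decay: "rapidly_decaying w" and ne1: "\<And>n. w n \<noteq> 1"
  shows "convergent_prod (\<lambda>k::nat. 1 - w (m - int k))"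
    and "convergent_prod (\<lambda>k::nat. 1 - w (int k))"
proof -
  have conv: "convergent_prod (\<lambda>k. 1 - w (h k))"
    if "((\<lambda>k. of_int \<bar>h k\<bar> ^ 2 * w (h k)) \<longlongrightarrow> 0) sequentially"
       "\<forall>\<^sub>F k in sequentially. real k \<le> 2 * of_int \<bar>h k\<bar>" for h
  proof -
    have "summable (\<lambda>k. norm (- w (h k)))"
      using summable_norm_of_square_decay[OF that] by simp
    moreover have "- w (h k) \<noteq> -1" for k
      using ne1 by simp
    ultimately show ?thesis
      using summable_imp_convergent_prod_complex by fastforce
  qed
  have linear: "\<forall>\<^sub>F k in sequentially. real k \<le> 2 * of_int \<bar>m - int k\<bar>"
    using eventually_ge_at_top[of "nat (2 * \<bar>m\<bar>)"]
  proof eventually_elim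
    case (elim k)
    then have "2 * \<bar>m\<bar> \<le> int k" by (simp add: nat_le_iff)
    then have "int k \<le> 2 * \<bar>m - int k\<bar>" by arith
    then have "real_of_int (int k) \<le> real_of_int (2 * \<bar>m - int k\<bar>)" by (simp only: of_int_le_iff)
    then show ?case by simp
  qed
  show "convergent_prod (\<lambda>k::nat. 1 - w (m - int k))"
    using linear decay filterlim_diff_int_at_bot[of m] unfolding rapidly_decaying_def
    by (intro conv) (auto intro: filterlim_compose[of _ _ at_bot])
  have "((\<lambda>n. of_int \<bar>n\<bar> ^ 2 * w n) \<longlongrightarrow> 0) at_top"
    using decay unfolding rapidly_decaying_def by blast
  from filterlim_compose[OF this filterlim_int_sequentially]
  show "convergent_prod (\<lambda>k::nat. 1 - w (int k))"
    by (intro conv) simp_all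
qed

section \<open>Analytic continuation from the unit circle\<close>

lemma eq_on_cball_if_eq_on_sphere:
  fixes f g :: "complex \<Rightarrow> complex"
  assumes "f holomorphic_on ball 0 1" "g holomorphic_on ball 0 1"
    and "continuous_on (cball 0 1) f" "continuous_on (cball 0 1) g"
    and "\<And>w. cmod w = 1 \<Longrightarrow> f w = g w" and "z \<in> cball 0 1"
  shows "f z = g z"
proof -
  have "norm (f z - g z) \<le> 0"
  proof (rule maximum_modulus_frontier[of "\<lambda>z. f z - g z" "cball 0 1"])
    show "(\<lambda>z. f z - g z) holomorphic_on interior (cball 0 1)"
      using assms(1,2) by (auto intro: holomorphic_intros)
    show "continuous_on (closure (cball 0 1)) (\<lambda>z. f z - g z)"
      using assms(3,4) by (auto intro: continuous_intros)
  qed (use assms(5,6) in \<open>auto simp: frontier_cball\<close>)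
  then show ?thesis by simp
qed

text \<open>Pasting \<open>g\<close> with \<open>0\<close> across the real axis gives an entire function vanishing on the upper
  half-plane.\<close>
lemma zero_on_lower_half_plane_if_zero_on_real_axis:
  assumes hol: "g holomorphic_on {z. Im z < 0}" and cont: "continuous_on {z. Im z \<le> 0} g"
    and real: "\<And>x. Im x = 0 \<Longrightarrow> g x = 0" and z: "Im z \<le> 0"
  shows "g z = 0"
proof -
  define H where "H z = (if Im z \<le> 0 then g z else 0)" for z
  have cont_H: "continuous_on UNIV H"
    unfolding H_def
  proof (rule continuous_on_cases_le)
    show "continuous_on {z \<in> UNIV. Im z \<le> 0} g"
      using cont by simp
    show "continuous_on {z \<in> UNIV. 0 \<le> Im z} (\<lambda>z. 0)"
      by simp
    show "continuous_on UNIV Im"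
      by (intro continuous_intros)
    show "g z = 0" if "z \<in> UNIV" "Im z = 0" for z
      using that real by simp
  qed
  have "H holomorphic_on UNIV \<inter> {z. \<i> \<bullet> z < 0}"
    using hol by (rule holomorphic_cong[THEN iffD1, rotated 2]) (auto simp: H_def)
  moreover have "(\<lambda>_. 0) holomorphic_on {z. 0 < Im z}"
    by simp
  then have "H holomorphic_on UNIV \<inter> {z. 0 < \<i> \<bullet> z}"
    by (rule holomorphic_cong[THEN iffD1, rotated 2]) (auto simp: H_def)
  ultimately have hol_H: "H holomorphic_on UNIV"
    using holomorphic_on_paste_across_line[OF open_UNIV complex_i_not_zero _ _ cont_H] by blast
  have "H z = 0"
  proof (rule analytic_continuation_open[where s = "{z. 0 < Im z}" and s' = UNIV
        and f = H and g = "\<lambda>_. 0" and z = z])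
    show "{z. 0 < Im z} \<noteq> {}"
      by (auto intro!: exI[of _ \<i>])
  qed (auto simp: H_def hol_H open_halfspace_Im_gt)
  with z show ?thesis by (simp add: H_def)
qed

text \<open>Via \<open>\<zeta> \<mapsto> exp (\<i> \<zeta>)\<close>, which maps the closed lower half-plane onto \<open>1 \<le> |z|\<close>
  and the real axis onto the unit circle.\<close>
lemma eq_outside_ball_if_eq_on_sphere:
  fixes f g :: "complex \<Rightarrow> complex"
  assumes hol: "f holomorphic_on {z. 1 < cmod z}" "g holomorphic_on {z. 1 < cmod z}"
    and cont: "continuous_on {z. 1 \<le> cmod z} f" "continuous_on {z. 1 \<le> cmod z} g"
    and sphere: "\<And>w. cmod w = 1 \<Longrightarrow> f w = g w" and z: "1 \<le> cmod z"
  shows "f z = g z"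
proof -
  have z0: "z \<noteq> 0"
    using z by auto
  define E where "E \<zeta> = exp (\<i> * \<zeta>)" for \<zeta>
  have norm_E: "cmod (E \<zeta>) = exp (- Im \<zeta>)" for \<zeta>
    by (simp add: E_def norm_exp_eq_Re)
  define h where "h = (\<lambda>w. f w - g w) \<circ> E"
  have "h \<zeta> = 0" if "Im \<zeta> \<le> 0" for \<zeta>
  proof (rule zero_on_lower_half_plane_if_zero_on_real_axis[OF _ _ _ that])
    have "E holomorphic_on {z. Im z < 0}"
      unfolding E_def by (intro holomorphic_intros)
    moreover have "(\<lambda>w. f w - g w) holomorphic_on E ` {z. Im z < 0}"
      by (rule holomorphic_on_subset[OF holomorphic_on_diff[OF hol]]) (auto simp: norm_E)
    ultimately show "h holomorphic_on {z. Im z < 0}"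
      unfolding h_def by (rule holomorphic_on_compose)
    have "continuous_on {z. Im z \<le> 0} E"
      unfolding E_def by (intro continuous_intros)
    moreover have "continuous_on (E ` {z. Im z \<le> 0}) (\<lambda>w. f w - g w)"
      by (rule continuous_on_subset[OF continuous_on_diff[OF cont]]) (auto simp: norm_E)
    ultimately show "continuous_on {z. Im z \<le> 0} h"
      unfolding h_def by (rule continuous_on_compose)
    show "h x = 0" if "Im x = 0" for x
      using that sphere by (simp add: h_def norm_E)
  qed
  moreover have "E (- \<i> * Ln z) = z" and "Im (- \<i> * Ln z) \<le> 0"
    using z z0 by (simp_all add: E_def Re_Ln)
  ultimately show ?thesis
    unfolding h_def by (metis comp_apply eq_iff_diff_eq_0)
qed

section \<open>Derivatives at a zero of finite order\<close>

lemma zorder_factorization_near: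
  assumes hol: "f holomorphic_on S" and S: "open S" "w \<in> S"
    and nonzero: "\<exists>\<^sub>F z in at w. f z \<noteq> 0"
  obtains r where "r > 0" "zor_poly f w holomorphic_on ball w r"
    "\<And>z. z \<in> ball w r \<Longrightarrow> f z = (z - w) ^ nat (zorder f w) * zor_poly f w z"
proof -
  obtain r where r: "r > 0" "ball w r \<subseteq> S"
    using S openE by blast
  have "\<exists>\<^sub>F z in at w. f z \<noteq> 0 \<and> z \<in> ball w r"
    using frequently_eventually_frequently[OF nonzero eventually_at_in_open'[of "ball w r" w]] r(1)
    by simp
  then have "\<exists>w'\<in>ball w r. f w' \<noteq> 0"
    using frequently_ex by blast
  then have "(if f w = 0 then 0 < zorder f w else zorder f w = 0) \<and>
      (\<exists>r'>0. cball w r' \<subseteq> ball w r \<and> zor_poly f w holomorphic_on cball w r' \<and>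
        (\<forall>z\<in>cball w r'. f z = zor_poly f w z * (z - w) ^ nat (zorder f w) \<and> zor_poly f w z \<noteq> 0))"
    using r(1) by (intro zorder_exist_zero[OF holomorphic_on_subset[OF hol r(2)]]) auto
  then obtain r' where "r' > 0" "zor_poly f w holomorphic_on cball w r'"
    "\<forall>z\<in>cball w r'. f z = zor_poly f w z * (z - w) ^ nat (zorder f w)"
    by blast
  then show thesis
    by (intro that[of r']) (auto simp: mult.commute intro: holomorphic_on_subset)
qed

lemma higher_deriv_eq_0_below_zorder:
  assumes hol: "f holomorphic_on S" and S: "open S" "w \<in> S"
    and nonzero: "\<exists>\<^sub>F z in at w. f z \<noteq> 0" and k: "int k < zorder f w"
  shows "(deriv ^^ k) f w = 0"
proof -
  define m where "m = nat (zorder f w)"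
  obtain r where r: "r > 0" "zor_poly f w holomorphic_on ball w r"
    and factor: "\<And>z. z \<in> ball w r \<Longrightarrow> f z = (z - w) ^ m * zor_poly f w z"
    using zorder_factorization_near[OF hol S nonzero] unfolding m_def by blast
  have "eventually (\<lambda>z. z \<in> ball w r) (nhds w)"
    using r(1) by (intro eventually_nhds_in_open) auto
  then have "(deriv ^^ k) f w = (deriv ^^ k) (\<lambda>z. (z - w) ^ m * zor_poly f w z) w"
    by (intro higher_deriv_cong_ev) (auto elim!: eventually_mono simp: factor)
  also have "\<dots> = (\<Sum>j=0..k. of_nat (k choose j) * (deriv ^^ j) (\<lambda>z. (z - w) ^ m) w
                              * (deriv ^^ (k - j)) (zor_poly f w) w)"
    using r by (intro higher_deriv_mult[of _ "ball w r"]) (auto intro!: holomorphic_intros)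
  also have "\<dots> = 0"
  proof (intro sum.neutral ballI)
    fix j assume "j \<in> {0..k}"
    then have "j < m" using k by (auto simp: m_def)
    then show "of_nat (k choose j) * (deriv ^^ j) (\<lambda>z. (z - w) ^ m) w
                 * (deriv ^^ (k - j)) (zor_poly f w) w = 0"
      by (simp add: higher_deriv_power)
  qed
  finally show ?thesis .
qed

lemma higher_deriv_eq_0_at_pole_of_inverse:
  assumes hol: "f holomorphic_on S" and S: "open S" "w \<in> S"
    and pole: "is_pole (\<lambda>z. inverse (f z)) w"
    and order: "zorder (\<lambda>z. inverse (f z)) w = - int m" and k: "k < m"
    and multiple: "\<And>z. z \<in> S \<Longrightarrow> g z = c * f z"
  shows "(deriv ^^ k) g w = 0"
proof -
  have "eventually (\<lambda>z. z \<in> S) (nhds w)"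
    using S by (rule eventually_nhds_in_open)
  then have "eventually (\<lambda>z. g z = c * f z) (nhds w)"
    using multiple by (rule eventually_mono)
  then have "(deriv ^^ k) g w = c * (deriv ^^ k) f w"
    using higher_deriv_cmult[OF hol S(2,1)] by (simp add: higher_deriv_cong_ev)
  also have "(deriv ^^ k) f w = 0"
  proof (rule higher_deriv_eq_0_below_zorder[OF hol S])
    have "f analytic_on {w}"
      using hol S analytic_at by blast
    moreover show nonzero: "\<exists>\<^sub>F z in at w. f z \<noteq> 0"
      using non_zero_neighbour_pole[OF pole] by (auto simp: eventually_frequently elim: eventually_mono)
    ultimately have "zorder (\<lambda>z. inverse (f z)) w = - zorder f w"
      by (intro zorder_inverse isolated_singularity_at_analytic not_essential_analytic)
    with order k show "int k < zorder f w" by simp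
  qed
  finally show ?thesis by simp
qed

section \<open>Wronskians and the products D_n\<close>

text \<open>Cramer's rule: in the eventual basis \<open>B, C\<close> the coordinates of \<open>A\<close> are ratios of Wronskians.\<close>
lemma tendsto_components_of_wronskians:
  fixes A B C :: "int \<Rightarrow> complex \<times> complex"
  assumes z: "cmod z = 1"
    and B: "((\<lambda>n. fst (B n) * z powi n) \<longlongrightarrow> 1) at_top" "((\<lambda>n. snd (B n)) \<longlongrightarrow> 0) at_top"
    and C: "((\<lambda>n. fst (C n)) \<longlongrightarrow> 0) at_top" "((\<lambda>n. snd (C n) * z powi (- n)) \<longlongrightarrow> 1) at_top"
    and AB: "((\<lambda>n. det2 (A n) (B n)) \<longlongrightarrow> LB) at_top"
    and AC: "((\<lambda>n. det2 (A n) (C n)) \<longlongrightarrow> LC) at_top"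
  shows "((\<lambda>n. fst (A n) * z powi n) \<longlongrightarrow> LC) at_top"
    and "((\<lambda>n. snd (A n) * z powi (- n)) \<longlongrightarrow> - LB) at_top"
proof -
  have z0: "z \<noteq> 0" using z by auto
  have unimodular: "norm (z powi n) = 1" for n
    using z by (simp add: norm_power_int)
  have C': "((\<lambda>n. fst (C n) * z powi n) \<longlongrightarrow> 0) at_top"
    and B': "((\<lambda>n. snd (B n) * z powi (- n)) \<longlongrightarrow> 0) at_top"
    using B(2) C(1) unimodular by (auto intro!: lim_null_mult_right_bounded)
  have "det2 (B n) (C n) = fst (B n) * z powi n * (snd (C n) * z powi (- n)) - snd (B n) * fst (C n)" for n
    using z0 by (simp add: det2_def power_int_minus field_simps)
  then have BC: "((\<lambda>n. det2 (B n) (C n)) \<longlongrightarrow> 1) at_top"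
    using tendsto_diff[OF tendsto_mult[OF B(1) C(2)] tendsto_mult[OF B(2) C(1)]] by simp
  then have BC_nz: "\<forall>\<^sub>F n in at_top. det2 (B n) (C n) \<noteq> 0"
    by (rule tendsto_imp_eventually_ne) simp
  have "((\<lambda>n. (det2 (A n) (C n) * (fst (B n) * z powi n) - det2 (A n) (B n) * (fst (C n) * z powi n))
      / det2 (B n) (C n)) \<longlongrightarrow> (LC * 1 - LB * 0) / 1) at_top"
    by (intro tendsto_intros AB AC B(1) C' BC) simp
  moreover have "\<forall>\<^sub>F n in at_top.
      (det2 (A n) (C n) * (fst (B n) * z powi n) - det2 (A n) (B n) * (fst (C n) * z powi n))
      / det2 (B n) (C n) = fst (A n) * z powi n"
    using BC_nz by eventually_elim (simp add: det2_def field_simps)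
  ultimately show "((\<lambda>n. fst (A n) * z powi n) \<longlongrightarrow> LC) at_top"
    by (simp add: tendsto_cong)
  have "((\<lambda>n. (det2 (A n) (C n) * (snd (B n) * z powi (- n)) - det2 (A n) (B n) * (snd (C n) * z powi (- n)))
      / det2 (B n) (C n)) \<longlongrightarrow> (LC * 0 - LB * 1) / 1) at_top"
    by (intro tendsto_intros AB AC B' C(2) BC) simp
  moreover have "\<forall>\<^sub>F n in at_top.
      (det2 (A n) (C n) * (snd (B n) * z powi (- n)) - det2 (A n) (B n) * (snd (C n) * z powi (- n)))
      / det2 (B n) (C n) = snd (A n) * z powi (- n)"
    using BC_nz by eventually_elim (simp add: det2_def field_simps)
  ultimately show "((\<lambda>n. snd (A n) * z powi (- n)) \<longlongrightarrow> - LB) at_top"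
    by (simp add: tendsto_cong)
qed

locale decaying_potentials =
  fixes u v :: "int \<Rightarrow> complex"
  assumes decay_u: "rapidly_decaying u" and decay_v: "rapidly_decaying v"
    and nonzero: "\<And>n. 1 - u n * v n \<noteq> 0"
begin

lemma convergent_prod_factors:
  "convergent_prod (\<lambda>k::nat. 1 - u (m - int k) * v (m - int k))"
  "convergent_prod (\<lambda>k::nat. 1 - u (int k) * v (int k))"
  using convergent_prod_one_minus_decaying[OF rapidly_decaying_mult[OF decay_u decay_v]] nonzero
  by (metis right_minus_eq)+

lemma Dn_nonzero: "Dn u v m \<noteq> 0"
  unfolding Dn_def using convergent_prod_factors(1) nonzero by (intro prodinf_nonzero) auto

lemma Dinf_nonzero: "Dinf u v \<noteq> 0"
  unfolding Dinf_def using Dn_nonzero convergent_prod_factors(2) nonzero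
  by (simp add: prodinf_nonzero)

lemma Dn_succ: "Dn u v (m + 1) = (1 - u (m + 1) * v (m + 1)) * Dn u v m"
proof -
  define g where "g k = 1 - u (m + 1 - int k) * v (m + 1 - int k)" for k :: nat
  have "(\<lambda>k. g (Suc k)) has_prod Dn u v m"
    unfolding Dn_def g_def using convergent_prod_factors(1)[THEN convergent_prod_has_prod] by simp
  then have "g has_prod (Dn u v m * g 0)"
    by (rule has_prod_Suc_imp)
  then show ?thesis
    unfolding Dn_def g_def by (simp add: has_prod_iff mult.commute)
qed

lemma Dn_tendsto_Dinf: "((\<lambda>n. Dn u v n) \<longlongrightarrow> Dinf u v) at_top"
proof (rule filterlim_int_of_nat_at_topD)
  have partial: "Dn u v (int N) = Dn u v (- 1) * (\<Prod>k\<le>N. 1 - u (int k) * v (int k))" for N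
  proof (induction N)
    case 0
    show ?case using Dn_succ[of "- 1"] by simp
  next
    case (Suc N)
    then show ?case using Dn_succ[of "int N"] by (simp add: add.commute)
  qed
  show "((\<lambda>N. Dn u v (int N)) \<longlongrightarrow> Dinf u v) sequentially"
    unfolding partial Dinf_def
    by (intro tendsto_mult_left convergent_prod_LIMSEQ convergent_prod_factors)
qed

lemma wronskian_mult_Dn_const:
  assumes "is_solution u v z X" "is_solution u v z Y" "z \<noteq> 0"
  shows "det2 (X n) (Y n) * Dn u v (n - 1) = det2 (X 0) (Y 0) * Dn u v (- 1)"
proof -
  define Q where "Q n = det2 (X n) (Y n) * Dn u v (n - 1)" for n
  have step: "Q n = Q (n + 1)" for n
    unfolding Q_def det2_solution_step[OF assms, of n] using Dn_succ[of "n - 1"] by simp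
  have "Q n = Q 0"
  proof (induction n rule: int_induct[where k = 0])
    case (step1 i)
    then show ?case using step[of i] by simp
  next
    case (step2 i)
    then show ?case using step[of "i - 1"] by simp
  qed simp
  then show ?thesis unfolding Q_def by simp
qed

lemma wronskian_tendsto:
  assumes "is_solution u v z X" "is_solution u v z Y" "z \<noteq> 0"
  shows "((\<lambda>n. det2 (X n) (Y n)) \<longlongrightarrow> det2 (X 0) (Y 0) * Dn u v (- 1) / Dinf u v) at_top"
proof -
  define K where "K = det2 (X 0) (Y 0) * Dn u v (- 1)"
  have "filterlim (\<lambda>n::int. n - 1) at_top at_top"
    unfolding filterlim_at_top
  proof
    fix Z :: int
    show "\<forall>\<^sub>F n in at_top. Z \<le> n - 1"
      using eventually_ge_at_top[of "Z + 1"] by eventually_elim linarith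
  qed
  from filterlim_compose[OF Dn_tendsto_Dinf this]
  have "((\<lambda>n. K / Dn u v (n - 1)) \<longlongrightarrow> K / Dinf u v) at_top"
    by (rule tendsto_divide[OF tendsto_const _ Dinf_nonzero])
  moreover have "det2 (X n) (Y n) = K / Dn u v (n - 1)" for n
    unfolding K_def using wronskian_mult_Dn_const[OF assms, of n] Dn_nonzero[of "n - 1"]
    by (simp add: eq_divide_eq)
  ultimately have "((\<lambda>n. det2 (X n) (Y n)) \<longlongrightarrow> K / Dinf u v) at_top"
    by simp
  then show ?thesis by (simp only: K_def)
qed

lemma wronskian_eq_of_tendsto:
  assumes "is_solution u v z X" "is_solution u v z Y" "z \<noteq> 0"
    and "((\<lambda>n. det2 (X n) (Y n)) \<longlongrightarrow> L) at_top"
  shows "det2 (X n) (Y n) = Dinf u v / Dn u v (n - 1) * L"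
proof -
  have "L = det2 (X 0) (Y 0) * Dn u v (- 1) / Dinf u v"
    using tendsto_unique[OF _ assms(4) wronskian_tendsto[OF assms(1-3)]] by simp
  then have "det2 (X n) (Y n) * Dn u v (n - 1) = L * Dinf u v"
    using wronskian_mult_Dn_const[OF assms(1-3), of n] Dinf_nonzero by (simp add: eq_divide_eq)
  then have "det2 (X n) (Y n) = L * Dinf u v / Dn u v (n - 1)"
    using Dn_nonzero[of "n - 1"] by (simp add: eq_divide_eq)
  then show ?thesis by (simp add: mult.commute)
qed

lemma wronskian_on_circle:
  assumes z: "cmod z = 1"
    and sol: "is_solution u v z A" "is_solution u v z B" "is_solution u v z C"
    and B: "((\<lambda>n. fst (B n) * z powi n) \<longlongrightarrow> 1) at_top" "((\<lambda>n. snd (B n)) \<longlongrightarrow> 0) at_top"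
    and C: "((\<lambda>n. fst (C n)) \<longlongrightarrow> 0) at_top" "((\<lambda>n. snd (C n) * z powi (- n)) \<longlongrightarrow> 1) at_top"
  shows "((\<lambda>n. fst (A n) * z powi n) \<longlongrightarrow> L) at_top \<Longrightarrow>
           det2 (A n) (C n) = Dinf u v / Dn u v (n - 1) * L"
    and "((\<lambda>n. snd (A n) * z powi (- n)) \<longlongrightarrow> L) at_top \<Longrightarrow>
           det2 (A n) (B n) = - (Dinf u v / Dn u v (n - 1)) * L"
proof -
  have z0: "z \<noteq> 0" using z by auto
  note AB = wronskian_tendsto[OF sol(1,2) z0] and AC = wronskian_tendsto[OF sol(1,3) z0]
  note A_lims = tendsto_components_of_wronskians[OF z B C AB AC]
  show "det2 (A n) (C n) = Dinf u v / Dn u v (n - 1) * L"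
    if "((\<lambda>n. fst (A n) * z powi n) \<longlongrightarrow> L) at_top"
  proof (rule wronskian_eq_of_tendsto[OF sol(1,3) z0])
    have "det2 (A 0) (C 0) * Dn u v (- 1) / Dinf u v = L"
      using tendsto_unique[OF _ A_lims(1) that] by simp
    with AC show "((\<lambda>n. det2 (A n) (C n)) \<longlongrightarrow> L) at_top" by simp
  qed
  show "det2 (A n) (B n) = - (Dinf u v / Dn u v (n - 1)) * L"
    if "((\<lambda>n. snd (A n) * z powi (- n)) \<longlongrightarrow> L) at_top"
  proof -
    have "det2 (A 0) (B 0) * Dn u v (- 1) / Dinf u v = - L"
      using tendsto_unique[OF _ A_lims(2) that] by auto
    with AB have "((\<lambda>n. det2 (A n) (B n)) \<longlongrightarrow> - L) at_top" by simp
    from wronskian_eq_of_tendsto[OF sol(1,2) z0 this] show ?thesis by simp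
  qed
qed

end

theorem theorem2p10:
  fixes u v :: "int \<Rightarrow> complex"
    and Psi Phi PsiB PhiB :: "complex \<Rightarrow> int \<Rightarrow> complex \<times> complex"
    and invT invTB :: "complex \<Rightarrow> complex"
  assumes decay_u: "rapidly_decaying u"
    and decay_v: "rapidly_decaying v"
    and nonzero: "\<And>n. 1 - u n * v n \<noteq> 0"
    \<comment> \<open>Psi z n = z^(-n) psi_n, Phi z n = z^n phi_n, invT = 1/T_r: analytic in |z|<1,
        continuous on |z|\<le>1\<close>
    and Psi_hol: "\<And>n. (\<lambda>z. fst (Psi z n)) holomorphic_on ball 0 1 \<and> (\<lambda>z. snd (Psi z n)) holomorphic_on ball 0 1"
    and Psi_cont: "\<And>n. continuous_on (cball 0 1) (\<lambda>z. fst (Psi z n)) \<and> continuous_on (cball 0 1) (\<lambda>z. snd (Psi z n))"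
    and Phi_hol: "\<And>n. (\<lambda>z. fst (Phi z n)) holomorphic_on ball 0 1 \<and> (\<lambda>z. snd (Phi z n)) holomorphic_on ball 0 1"
    and Phi_cont: "\<And>n. continuous_on (cball 0 1) (\<lambda>z. fst (Phi z n)) \<and> continuous_on (cball 0 1) (\<lambda>z. snd (Phi z n))"
    and invT_hol: "invT holomorphic_on ball 0 1"
    and invT_cont: "continuous_on (cball 0 1) invT"
    \<comment> \<open>PsiB z n = z^n psibar_n, PhiB z n = z^(-n) phibar_n, invTB = 1/Tbar_r: analytic in |z|>1,
        continuous on |z|\<ge>1\<close>
    and PsiB_hol: "\<And>n. (\<lambda>z. fst (PsiB z n)) holomorphic_on {z. 1 < cmod z} \<and> (\<lambda>z. snd (PsiB z n)) holomorphic_on {z. 1 < cmod z}"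
    and PsiB_cont: "\<And>n. continuous_on {z. 1 \<le> cmod z} (\<lambda>z. fst (PsiB z n)) \<and> continuous_on {z. 1 \<le> cmod z} (\<lambda>z. snd (PsiB z n))"
    and PhiB_hol: "\<And>n. (\<lambda>z. fst (PhiB z n)) holomorphic_on {z. 1 < cmod z} \<and> (\<lambda>z. snd (PhiB z n)) holomorphic_on {z. 1 < cmod z}"
    and PhiB_cont: "\<And>n. continuous_on {z. 1 \<le> cmod z} (\<lambda>z. fst (PhiB z n)) \<and> continuous_on {z. 1 \<le> cmod z} (\<lambda>z. snd (PhiB z n))"
    and invTB_hol: "invTB holomorphic_on {z. 1 < cmod z}"
    and invTB_cont: "continuous_on {z. 1 \<le> cmod z} invTB"
    \<comment> \<open>On |z| = 1 the (unnormalised) Jost solutions solve the system and have the prescribed asymptotics\<close>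
    and psi_sol: "\<And>z. cmod z = 1 \<Longrightarrow> is_solution u v z (\<lambda>n. scalev (z powi n) (Psi z n))"
    and phi_sol: "\<And>z. cmod z = 1 \<Longrightarrow> is_solution u v z (\<lambda>n. scalev (z powi (- n)) (Phi z n))"
    and psiB_sol: "\<And>z. cmod z = 1 \<Longrightarrow> is_solution u v z (\<lambda>n. scalev (z powi (- n)) (PsiB z n))"
    and phiB_sol: "\<And>z. cmod z = 1 \<Longrightarrow> is_solution u v z (\<lambda>n. scalev (z powi n) (PhiB z n))"
    and psi_asym: "\<And>z. cmod z = 1 \<Longrightarrow>
        ((\<lambda>n. fst (scalev (z powi n) (Psi z n))) \<longlongrightarrow> 0) at_top \<and>
        ((\<lambda>n. snd (scalev (z powi n) (Psi z n)) * z powi (- n)) \<longlongrightarrow> 1) at_top"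
    and phi_asym: "\<And>z. cmod z = 1 \<Longrightarrow>
        ((\<lambda>n. fst (scalev (z powi (- n)) (Phi z n)) * z powi n) \<longlongrightarrow> 1) at_bot \<and>
        ((\<lambda>n. snd (scalev (z powi (- n)) (Phi z n))) \<longlongrightarrow> 0) at_bot"
    and psiB_asym: "\<And>z. cmod z = 1 \<Longrightarrow>
        ((\<lambda>n. fst (scalev (z powi (- n)) (PsiB z n)) * z powi n) \<longlongrightarrow> 1) at_top \<and>
        ((\<lambda>n. snd (scalev (z powi (- n)) (PsiB z n))) \<longlongrightarrow> 0) at_top"
    and phiB_asym: "\<And>z. cmod z = 1 \<Longrightarrow>
        ((\<lambda>n. fst (scalev (z powi n) (PhiB z n))) \<longlongrightarrow> 0) at_bot \<and>
        ((\<lambda>n. snd (scalev (z powi n) (PhiB z n)) * z powi (- n)) \<longlongrightarrow> 1) at_bot"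
    \<comment> \<open>definition of the right transmission coefficients on |z| = 1\<close>
    and Tr_def: "\<And>z. cmod z = 1 \<Longrightarrow>
        ((\<lambda>n. fst (scalev (z powi (- n)) (Phi z n)) * z powi n) \<longlongrightarrow> invT z) at_top"
    and TrB_def: "\<And>z. cmod z = 1 \<Longrightarrow>
        ((\<lambda>n. snd (scalev (z powi n) (PhiB z n)) * z powi (- n)) \<longlongrightarrow> invTB z) at_top"
  shows
    "(\<forall>n. \<forall>z\<in>cball 0 1.
        det2 (Phi z n) (Psi z n) = Dinf u v / Dn u v (n - 1) * invT z) \<and>
     (\<forall>n. \<forall>z. 1 \<le> cmod z \<longrightarrow>
        det2 (PhiB z n) (PsiB z n) = - (Dinf u v / Dn u v (n - 1)) * invTB z) \<and>
     (\<forall>n. \<forall>z\<in>cball 0 1. lin_dep2 (Phi z n) (Psi z n) \<longleftrightarrow> invT z = 0) \<and>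
     (\<forall>n. \<forall>z. 1 \<le> cmod z \<longrightarrow> (lin_dep2 (PhiB z n) (PsiB z n) \<longleftrightarrow> invTB z = 0)) \<and>
     (\<forall>w m. w \<in> ball 0 1 \<and> is_pole (\<lambda>z. inverse (invT z)) w \<and>
            zorder (\<lambda>z. inverse (invT z)) w = - int m \<longrightarrow>
        (\<forall>k<m. \<forall>n. (deriv ^^ k) (\<lambda>z. det2 (Phi z n) (Psi z n)) w = 0)) \<and>
     (\<forall>w m. 1 < cmod w \<and> is_pole (\<lambda>z. inverse (invTB z)) w \<and>
            zorder (\<lambda>z. inverse (invTB z)) w = - int m \<longrightarrow>
        (\<forall>k<m. \<forall>n. (deriv ^^ k) (\<lambda>z. det2 (PhiB z n) (PsiB z n)) w = 0))"
proof -
  interpret decaying_potentials u v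
    using decay_u decay_v nonzero by unfold_locales
  define c where "c n = Dinf u v / Dn u v (n - 1)" for n
  have c_nonzero: "c n \<noteq> 0" for n
    using Dinf_nonzero Dn_nonzero by (simp add: c_def)
  have unit_nonzero: "z \<noteq> 0" if "cmod z = 1" for z :: complex
    using that by auto
  have circle: "det2 (Phi z n) (Psi z n) = c n * invT z" if z: "cmod z = 1" for z n
    using wronskian_on_circle(1)[OF z phi_sol[OF z] psiB_sol[OF z] psi_sol[OF z] _ _ _ _ Tr_def[OF z]]
      psiB_asym[OF z] psi_asym[OF z]
    unfolding c_def det2_scalev_powi(1)[OF unit_nonzero[OF z]] by blast
  have circle_bar: "det2 (PhiB z n) (PsiB z n) = - c n * invTB z" if z: "cmod z = 1" for z n
    using wronskian_on_circle(2)[OF z phiB_sol[OF z] psiB_sol[OF z] psi_sol[OF z] _ _ _ _ TrB_def[OF z]]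
      psiB_asym[OF z] psi_asym[OF z]
    unfolding c_def det2_scalev_powi(2)[OF unit_nonzero[OF z]] by blast
  have disk: "det2 (Phi z n) (Psi z n) = c n * invT z" if "z \<in> cball 0 1" for z n
    by (rule eq_on_cball_if_eq_on_sphere[OF holomorphic_on_det2[OF Phi_hol Psi_hol] _
          continuous_on_det2[OF Phi_cont Psi_cont] _ circle that])
      (auto intro!: holomorphic_intros continuous_intros invT_hol invT_cont)
  have exterior: "det2 (PhiB z n) (PsiB z n) = - c n * invTB z" if "1 \<le> cmod z" for z n
    by (rule eq_outside_ball_if_eq_on_sphere[OF holomorphic_on_det2[OF PhiB_hol PsiB_hol] _
          continuous_on_det2[OF PhiB_cont PsiB_cont] _ circle_bar that])
      (auto intro!: holomorphic_intros continuous_intros invTB_hol invTB_cont)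
  have "(deriv ^^ k) (\<lambda>z. det2 (Phi z n) (Psi z n)) w = 0"
    if "w \<in> ball 0 1" "is_pole (\<lambda>z. inverse (invT z)) w"
       "zorder (\<lambda>z. inverse (invT z)) w = - int m" "k < m" for w m k n
    by (rule higher_deriv_eq_0_at_pole_of_inverse[OF invT_hol open_ball that, where c = "c n"])
      (simp add: disk)
  moreover have "(deriv ^^ k) (\<lambda>z. det2 (PhiB z n) (PsiB z n)) w = 0"
    if "w \<in> {z. 1 < cmod z}" "is_pole (\<lambda>z. inverse (invTB z)) w"
       "zorder (\<lambda>z. inverse (invTB z)) w = - int m" "k < m" for w m k n
    by (rule higher_deriv_eq_0_at_pole_of_inverse[OF invTB_hol _ that, where c = "- c n"])
      (auto intro: open_Collect_less continuous_intros simp: exterior)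
  ultimately show ?thesis
    unfolding lin_dep2_iff_det2_eq_0 using disk exterior c_nonzero by (auto simp: c_def)
qed

end
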